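(* Let $s,x,y,t\in\mathbb{C}$ with $sy+xt+1=x^2+y^2$. Let $F$ be a symmetric signature of arity $r+1$ and $G$ a symmetric signature of arity $w+1$ on $\{R,G,B\}$ ($r,w\ge0$), both generalized Fibonacci gates with parameters $s,x,y,t$. Define $H:\{R,G,B\}^{r+w}\to\mathbb{C}$ by $H(y_1,\dots,y_{r+w})=\sum_{z\in\{R,G,B\}}F(y_1,\dots,y_r,z)\,G(y_{r+1},\dots,y_{r+w},z)$. Then $H$ is symmetric and is a generalized Fibonacci gate with parameters $s,x,y,t$.
   Context: A signature of arity $n$ on $\{R,G,B\}$ is a function $\{R,G,B\}^n\to\mathbb{C}$; symmetric means invariant under permutations of its variables, and then $g_{i,j,k}$ denotes its value on inputs with $i$ entries $R$, $j$ entries $G$, $k$ entries $B$. A symmetric signature $g$ of arity $n\ge2$ is a generalized Fibonacci gate with parameters $s,x,y,t$ (where $sy+xt+1=x^2+y^2$) if for all $i,j,k\ge0$ with $i+j+k=n$, $i\ge2$: $g_{i-2,j+2,k}=g_{i,j,k}+s\,g_{i-1,j+1,k}+x\,g_{i-1,j,k+1}$, $g_{i-2,j+1,k+1}=x\,g_{i-1,j+1,k}+y\,g_{i-1,j,k+1}$, $g_{i-2,j,k+2}=g_{i,j,k}+y\,g_{i-1,j+1,k}+t\,g_{i-1,j,k+1}$. Signatures of arity $\le1$ are considered generalized Fibonacci gates for any parameters. *)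

theory Defs
  imports Complex_Main "HOL-Library.Multiset"
begin

datatype color = R | G | B

text \<open>A signature of arity n on {R,G,B} is a function on lists of colours of length n;
  only its values on lists of length n are relevant.\<close>
type_synonym signature = "color list \<Rightarrow> complex"

definition symmetric_sig :: "nat \<Rightarrow> signature \<Rightarrow> bool" where
  "symmetric_sig n g \<longleftrightarrow>
     (\<forall>xs ys. length xs = n \<longrightarrow> mset xs = mset ys \<longrightarrow> g xs = g ys)"

definition gval :: "signature \<Rightarrow> nat \<Rightarrow> nat \<Rightarrow> nat \<Rightarrow> complex" where
  "gval g i j k = g (replicate i R @ replicate j G @ replicate k B)"

definition gen_fib_gate ::
  "nat \<Rightarrow> complex \<Rightarrow> complex \<Rightarrow> complex \<Rightarrow> complex \<Rightarrow> signature \<Rightarrow> bool" where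
  "gen_fib_gate n s x y t g \<longleftrightarrow>
     (n \<ge> 2 \<longrightarrow>
       (\<forall>i j k. i + j + k = n \<longrightarrow> i \<ge> 2 \<longrightarrow>
          gval g (i-2) (j+2) k = gval g i j k + s * gval g (i-1) (j+1) k + x * gval g (i-1) j (k+1)
        \<and> gval g (i-2) (j+1) (k+1) = x * gval g (i-1) (j+1) k + y * gval g (i-1) j (k+1)
        \<and> gval g (i-2) j (k+2) = gval g i j k + y * gval g (i-1) (j+1) k + t * gval g (i-1) j (k+1)))"

definition contract :: "nat \<Rightarrow> signature \<Rightarrow> signature \<Rightarrow> signature" where
  "contract r F Gs = (\<lambda>ys. \<Sum>z\<in>{R, G, B}. F (take r ys @ [z]) * Gs (drop r ys @ [z]))"

end

theory Submission
  imports Defs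
begin

text \<open>
  For a symmetric signature g of arity n and a word \<open>rest\<close> of length n - 2, the Fibonacci
  conditions say exactly that the 3\<times>3 slice matrix \<open>\<lambda>a b. g (rest @ [a, b])\<close> satisfies three
  linear relations. Symmetric matrices satisfying them form a 3-dimensional space spanned by
  I, P and Q (the solutions with R-row (0,1,0) and (0,0,1)), and under the parameter
  relation \<open>sy + xt + 1 = x\<^sup>2 + y\<^sup>2\<close> this space is a commutative algebra:
  \<open>P\<^sup>2 = I + sP + xQ\<close>, \<open>PQ = QP = xP + yQ\<close>, \<open>Q\<^sup>2 = I + yP + tQ\<close>.
  A slice of the contraction H of F and G is a linear combination of slices of F or of G, or,
  when the two free variables sit on different sides of the contracted edge, a product of
  slices of F and G; commutativity of that product also gives the symmetry of H.
\<close>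

definition fib_matrix ::
  "complex \<Rightarrow> complex \<Rightarrow> complex \<Rightarrow> complex \<Rightarrow> (color \<Rightarrow> color \<Rightarrow> complex) \<Rightarrow> bool" where
  "fib_matrix s x y t m \<longleftrightarrow>
     m G G = m R R + s * m R G + x * m R B
   \<and> m G B = x * m R G + y * m R B
   \<and> m B B = m R R + y * m R G + t * m R B"

definition symmetric_matrix :: "(color \<Rightarrow> color \<Rightarrow> complex) \<Rightarrow> bool" where
  "symmetric_matrix m \<longleftrightarrow> (\<forall>a b. m a b = m b a)"

lemma symmetric_matrix_entries:
  "symmetric_matrix m \<Longrightarrow> m G R = m R G \<and> m B R = m R B \<and> m B G = m G B"
  unfolding symmetric_matrix_def by simp

lemma sum_colors: "(\<Sum>z\<in>{R, G, B}. f z) = f R + f G + (f B :: 'a :: comm_monoid_add)"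
  by (simp add: add.assoc)

lemma fib_matrix_sum:
  assumes "\<And>z. z \<in> Z \<Longrightarrow> fib_matrix s x y t (M z)"
  shows "fib_matrix s x y t (\<lambda>a b. \<Sum>z\<in>Z. c z * M z a b)"
  using assms
proof (induction Z rule: infinite_finite_induct)
  case (insert z Z)
  then show ?case
    by (simp add: fib_matrix_def algebra_simps)
qed (simp_all add: fib_matrix_def)

text \<open>The product identities below hold only modulo the parameter relation; each proof supplies
  the cofactor \<open>c\<close> explicitly.\<close>

lemma eq_modulo_fib_relation:
  fixes E E' c s x y t :: complex
  assumes "E - E' = c * (s * y + x * t + 1 - x^2 - y^2)" and "s * y + x * t + 1 = x^2 + y^2"
  shows "E = E'"
  using assms by simp

lemma fib_matrix_mult_commute:
  assumes rel: "s * y + x * t + 1 = x^2 + y^2"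
    and fm: "fib_matrix s x y t m" and fn: "fib_matrix s x y t n"
    and "symmetric_matrix m" and "symmetric_matrix n"
  shows "(\<Sum>z\<in>{R, G, B}. m a z * n b z) = (\<Sum>z\<in>{R, G, B}. m b z * n a z)"
proof -
  note entries = symmetric_matrix_entries[OF \<open>symmetric_matrix m\<close>]
    symmetric_matrix_entries[OF \<open>symmetric_matrix n\<close>]
    fm[unfolded fib_matrix_def] fn[unfolded fib_matrix_def]
  show ?thesis
    unfolding sum_colors
    apply (cases a; cases b; simp only: entries)
    apply (simp_all add: algebra_simps)
    \<comment> \<open>only the entries (G, B) and (B, G) need the parameter relation\<close>
     apply (rule eq_modulo_fib_relation[OF _ rel, where c = "m R G * n R B - m R B * n R G"],
        simp add: algebra_simps power2_eq_square)
    apply (rule eq_modulo_fib_relation[OF _ rel, where c = "m R B * n R G - m R G * n R B"],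
        simp add: algebra_simps power2_eq_square)
    done
qed

lemma fib_matrix_mult:
  assumes rel: "s * y + x * t + 1 = x^2 + y^2"
    and fm: "fib_matrix s x y t m" and fn: "fib_matrix s x y t n"
    and "symmetric_matrix m" and "symmetric_matrix n"
  shows "fib_matrix s x y t (\<lambda>a b. \<Sum>z\<in>{R, G, B}. m a z * n b z)"
proof -
  note entries = symmetric_matrix_entries[OF \<open>symmetric_matrix m\<close>]
    symmetric_matrix_entries[OF \<open>symmetric_matrix n\<close>]
    fm[unfolded fib_matrix_def] fn[unfolded fib_matrix_def]
  show ?thesis
    unfolding fib_matrix_def sum_colors
    apply (simp only: entries)
    apply (intro conjI)
      apply (rule eq_modulo_fib_relation[OF _ rel, where c = "- m R B * n R B"],
        simp add: algebra_simps power2_eq_square)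
     apply (rule eq_modulo_fib_relation[OF _ rel, where c = "m R G * n R B"],
        simp add: algebra_simps power2_eq_square)
    apply (rule eq_modulo_fib_relation[OF _ rel, where c = "- m R G * n R G"],
        simp add: algebra_simps power2_eq_square)
    done
qed

lemma symmetric_sigD:
  "symmetric_sig n g \<Longrightarrow> length xs = n \<Longrightarrow> mset xs = mset ys \<Longrightarrow> g xs = g ys"
  unfolding symmetric_sig_def by blast

lemma mset_eq_color_counts:
  "mset xs = replicate_mset (count (mset xs) R) R
     + replicate_mset (count (mset xs) G) G + replicate_mset (count (mset xs) B) B"
  by (rule multiset_eqI) (case_tac x; simp)

lemma length_eq_color_counts:
  "length xs = count (mset xs) R + count (mset xs) G + count (mset xs) B"
  using arg_cong[OF mset_eq_color_counts[of xs], of size] by simp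

lemma symmetric_sig_eq_gval:
  assumes "symmetric_sig n g" and "length xs = n"
  shows "g xs = gval g (count (mset xs) R) (count (mset xs) G) (count (mset xs) B)"
  unfolding gval_def using assms
  by (rule symmetric_sigD) (subst mset_eq_color_counts, simp)

lemma symmetric_matrix_slice:
  "symmetric_sig n g \<Longrightarrow> length rest + 2 = n \<Longrightarrow> symmetric_matrix (\<lambda>a b. g (rest @ [a, b]))"
  unfolding symmetric_matrix_def by (auto intro: symmetric_sigD)

lemma fib_matrix_slice:
  assumes sym: "symmetric_sig n g" and fib: "gen_fib_gate n s x y t g"
    and len: "length rest + 2 = n"
  shows "fib_matrix s x y t (\<lambda>a b. g (rest @ [a, b]))"
proof -
  define i j k where "i = count (mset rest) R" and "j = count (mset rest) G"
    and "k = count (mset rest) B"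
  have "(i + 2) + j + k = n"
    using len length_eq_color_counts[of rest] by (simp add: i_def j_def k_def)
  then have "gval g i (j+2) k = gval g (i+2) j k + s * gval g (i+1) (j+1) k + x * gval g (i+1) j (k+1)
      \<and> gval g i (j+1) (k+1) = x * gval g (i+1) (j+1) k + y * gval g (i+1) j (k+1)
      \<and> gval g i j (k+2) = gval g (i+2) j k + y * gval g (i+1) (j+1) k + t * gval g (i+1) j (k+1)"
    using fib unfolding gen_fib_gate_def by fastforce
  then show ?thesis
    unfolding fib_matrix_def
    using symmetric_sig_eq_gval[OF sym, of "rest @ [_, _]"] len
    by (simp add: i_def j_def k_def)
qed

lemma gen_fib_gateI_slices:
  assumes sym: "symmetric_sig n g"
    and slices: "\<And>rest. length rest + 2 = n \<Longrightarrow> fib_matrix s x y t (\<lambda>a b. g (rest @ [a, b]))"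
  shows "gen_fib_gate n s x y t g"
  unfolding gen_fib_gate_def
proof (intro impI allI)
  fix i j k assume "2 \<le> n" "i + j + k = n" "2 \<le> i"
  then obtain i' where i: "i = i' + 2" by (metis add.commute le_Suc_ex)
  define rest where "rest = replicate i' R @ replicate j G @ replicate k B"
  have len: "length rest + 2 = n" using \<open>i + j + k = n\<close> i by (simp add: rest_def)
  show "gval g (i - 2) (j + 2) k = gval g i j k + s * gval g (i - 1) (j + 1) k + x * gval g (i - 1) j (k + 1) \<and>
      gval g (i - 2) (j + 1) (k + 1) = x * gval g (i - 1) (j + 1) k + y * gval g (i - 1) j (k + 1) \<and>
      gval g (i - 2) j (k + 2) = gval g i j k + y * gval g (i - 1) (j + 1) k + t * gval g (i - 1) j (k + 1)"
    using slices[OF len] symmetric_sig_eq_gval[OF sym, of "rest @ [_, _]"] len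
    unfolding fib_matrix_def i by (simp add: rest_def)
qed

lemma adjacent_swap_invariant_move:
  assumes swap: "\<And>p a b q. length p + length q + 2 = n \<Longrightarrow> f (p @ a # b # q) = f (p @ b # a # q)"
    and "length p + length ys + length zs + 1 = n"
  shows "f (p @ a # ys @ zs) = f (p @ ys @ a # zs)"
  using assms(2)
proof (induction ys arbitrary: p)
  case (Cons c ys)
  have "f (p @ a # c # ys @ zs) = f ((p @ [c]) @ a # ys @ zs)"
    using swap Cons.prems by simp
  also have "\<dots> = f ((p @ [c]) @ ys @ a # zs)"
    using Cons.prems by (intro Cons.IH) simp
  finally show ?case by simp
qed simp

lemma adjacent_swap_invariant_mset_eq:
  assumes swap: "\<And>p a b q. length p + length q + 2 = n \<Longrightarrow> f (p @ a # b # q) = f (p @ b # a # q)"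
    and "length (p @ xs) = n" and "mset xs = mset ys"
  shows "f (p @ xs) = f (p @ ys)"
  using assms(2,3)
proof (induction xs arbitrary: p ys)
  case (Cons a xs)
  then have "a \<in> set ys" by (metis list.set_intros(1) set_mset_mset)
  then obtain ys1 ys2 where ys: "ys = ys1 @ a # ys2" by (metis split_list)
  with Cons.prems have "mset xs = mset (ys1 @ ys2)" by simp
  then have "f ((p @ [a]) @ xs) = f ((p @ [a]) @ ys1 @ ys2)"
    using Cons.prems by (intro Cons.IH) simp
  also have "\<dots> = f (p @ ys1 @ a # ys2)"
  proof -
    have "length xs = length ys1 + length ys2"
      using mset_eq_length[OF \<open>mset xs = mset (ys1 @ ys2)\<close>] by simp
    then show ?thesis
      using adjacent_swap_invariant_move[where f = f, OF swap, where p = p and ys = ys1 and zs = ys2]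
        Cons.prems
      by simp
  qed
  finally show ?case using ys by simp
qed simp

lemma symmetric_sigI_adjacent_swaps:
  assumes "\<And>p a b q. length p + length q + 2 = n \<Longrightarrow> g (p @ a # b # q) = g (p @ b # a # q)"
  shows "symmetric_sig n g"
  unfolding symmetric_sig_def
  using adjacent_swap_invariant_mset_eq[where f = g, OF assms, where p = "[]"] by simp

lemma contract_straddle:
  assumes sG: "symmetric_sig (w + 1) Gs"
    and "length p + 1 = r" and "length q + 1 = w"
  shows "contract r F Gs (p @ u # v # q) = (\<Sum>z\<in>{R, G, B}. F (p @ [u, z]) * Gs (q @ [v, z]))"
proof -
  have "take r (p @ u # v # q) = p @ [u]" and "drop r (p @ u # v # q) = v # q"
    using \<open>length p + 1 = r\<close> by auto
  moreover have "Gs (v # q @ [z]) = Gs (q @ [v, z])" for z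
    using assms by (intro symmetric_sigD[OF sG]) simp_all
  ultimately show ?thesis
    unfolding contract_def by simp
qed

lemma symmetric_sig_contract:
  assumes rel: "s * y + x * t + 1 = x^2 + y^2"
    and sF: "symmetric_sig (r + 1) F" and sG: "symmetric_sig (w + 1) Gs"
    and fF: "gen_fib_gate (r + 1) s x y t F" and fG: "gen_fib_gate (w + 1) s x y t Gs"
  shows "symmetric_sig (r + w) (contract r F Gs)"
proof (rule symmetric_sigI_adjacent_swaps)
  fix p q :: "color list" and a b assume len: "length p + length q + 2 = r + w"
  consider (left) "length p + 2 \<le> r" | (right) "r \<le> length p" | (straddle) "length p + 1 = r"
    by linarith
  then show "contract r F Gs (p @ a # b # q) = contract r F Gs (p @ b # a # q)"
  proof cases
    case left
    then obtain k where k: "r = length p + 2 + k" using le_Suc_ex by blast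
    then have "take r (p @ u # v # q) = p @ u # v # take k q"
      and "drop r (p @ u # v # q) = drop k q" for u v
      by simp_all
    moreover have "F (p @ a # b # take k q @ [z]) = F (p @ b # a # take k q @ [z])" for z
      using k len by (intro symmetric_sigD[OF sF]) simp_all
    ultimately show ?thesis
      unfolding contract_def by simp
  next
    case right
    then obtain k where k: "length p = r + k" using le_Suc_ex by blast
    then have "take r (p @ u # v # q) = take r p"
      and "drop r (p @ u # v # q) = drop r p @ u # v # q" for u v
      by simp_all
    moreover have "Gs (drop r p @ a # b # q @ [z]) = Gs (drop r p @ b # a # q @ [z])" for z
      using k len by (intro symmetric_sigD[OF sG]) simp_all
    ultimately show ?thesis
      unfolding contract_def by simp
  next
    case straddle
    have lq: "length q + 1 = w" and lp: "length p + 2 = r + 1"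
      using len straddle by simp_all
    then have lq': "length q + 2 = w + 1" by simp
    show ?thesis
      unfolding contract_straddle[OF sG straddle lq]
      by (rule fib_matrix_mult_commute[OF rel fib_matrix_slice[OF sF fF lp]
            fib_matrix_slice[OF sG fG lq'] symmetric_matrix_slice[OF sF lp]
            symmetric_matrix_slice[OF sG lq']])
  qed
qed

lemma gen_fib_gate_contract:
  assumes rel: "s * y + x * t + 1 = x^2 + y^2"
    and sF: "symmetric_sig (r + 1) F" and sG: "symmetric_sig (w + 1) Gs"
    and fF: "gen_fib_gate (r + 1) s x y t F" and fG: "gen_fib_gate (w + 1) s x y t Gs"
  shows "gen_fib_gate (r + w) s x y t (contract r F Gs)"
proof (rule gen_fib_gateI_slices[OF symmetric_sig_contract[OF assms]])
  fix rest :: "color list" assume len: "length rest + 2 = r + w"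
  consider (w0) "w = 0" | (w1) "w = 1" | (w2) "w \<ge> 2" by linarith
  then show "fib_matrix s x y t (\<lambda>a b. contract r F Gs (rest @ [a, b]))"
  proof cases
    case w0
    then have lr: "length (rest @ [z]) + 2 = r + 1" for z :: color
      using len by simp
    have slice: "contract r F Gs (rest @ [a, b])
        = (\<Sum>z\<in>{R, G, B}. Gs [z] * F ((rest @ [z]) @ [a, b]))" for a b
    proof -
      have "take r (rest @ [a, b]) = rest @ [a, b]" and "drop r (rest @ [a, b]) = []"
        using len w0 by simp_all
      moreover have "F (rest @ [a, b, z]) = F ((rest @ [z]) @ [a, b])" for z
        using len w0 by (intro symmetric_sigD[OF sF]) simp_all
      ultimately show ?thesis
        unfolding contract_def by (simp add: mult.commute)
    qed
    show ?thesis
      unfolding slice by (rule fib_matrix_sum, rule fib_matrix_slice[OF sF fF lr])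
  next
    case w1
    have lp: "length rest + 1 = r" and lq: "length ([] :: color list) + 1 = w"
      using len w1 by simp_all
    have lr: "length rest + 2 = r + 1" and lw: "length ([] :: color list) + 2 = w + 1"
      using lp lq by simp_all
    show ?thesis
      using contract_straddle[OF sG lp lq]
        fib_matrix_mult[OF rel fib_matrix_slice[OF sF fF lr] fib_matrix_slice[OF sG fG lw]
          symmetric_matrix_slice[OF sF lr] symmetric_matrix_slice[OF sG lw]]
      by simp
  next
    case w2
    then have lw: "length (drop r rest @ [z]) + 2 = w + 1" for z :: color
      using len by simp
    have "take r (rest @ [a, b]) = take r rest" and "drop r (rest @ [a, b]) = drop r rest @ [a, b]"
      for a b :: color
      using len w2 by simp_all
    then have slice: "contract r F Gs (rest @ [a, b])
        = (\<Sum>z\<in>{R, G, B}. F (take r rest @ [z]) * Gs ((drop r rest @ [z]) @ [a, b]))" for a b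
      unfolding contract_def
      by (intro sum.cong refl arg_cong2[where f = "(*)"] symmetric_sigD[OF sG]) (use lw in auto)
    show ?thesis
      unfolding slice by (rule fib_matrix_sum, rule fib_matrix_slice[OF sG fG lw])
  qed
qed

theorem mainTheorem5:
  fixes s x y t :: complex and r w :: nat and F Gs :: signature
  assumes "s * y + x * t + 1 = x^2 + y^2"
    and "symmetric_sig (r + 1) F" and "symmetric_sig (w + 1) Gs"
    and "gen_fib_gate (r + 1) s x y t F" and "gen_fib_gate (w + 1) s x y t Gs"
  shows "symmetric_sig (r + w) (contract r F Gs) \<and> gen_fib_gate (r + w) s x y t (contract r F Gs)"
  using symmetric_sig_contract[OF assms] gen_fib_gate_contract[OF assms] by blast

end
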